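(* Let $\hat\alpha\in\{-1,-2,\dots\}$ and let $\mathcal F=(F_1,F_2)$ be a pair of finite sets of positive integers. Then the polynomials $L_n^{\hat\alpha;\mathcal F}$, $n\in\sigma_{\mathcal F}$, are common eigenfunctions of the second order differential operator $D_{\mathcal F}=x\partial^2+h_1(x)\partial+h_0(x)$, $\partial=d/dx$, where $h_1(x)=\hat\alpha+k+1-x-2x\frac{(\Omega^{\hat\alpha}_{\mathcal F})'(x)}{\Omega^{\hat\alpha}_{\mathcal F}(x)}$ and $h_0(x)=-k_1-u_{\mathcal F}+(x-\hat\alpha-k)\frac{(\Omega^{\hat\alpha}_{\mathcal F})'(x)}{\Omega^{\hat\alpha}_{\mathcal F}(x)}+x\frac{(\Omega^{\hat\alpha}_{\mathcal F})''(x)}{\Omega^{\hat\alpha}_{\mathcal F}(x)}$; more precisely $D_{\mathcal F}(L_n^{\hat\alpha;\mathcal F})=-n\,L_n^{\hat\alpha;\mathcal F}$ for $n\in\sigma_{\mathcal F}$.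
   Context: $k_i=|F_i|$, $k=k_1+k_2$. Laguerre: $L_n^\alpha(x)=\sum_{j=0}^n\frac{(-x)^j}{j!}\binom{n+\alpha}{n-j}$. $u_{\mathcal F}=\sum_{f\in F_1}f+\sum_{f\in F_2}f-\binom{k_1+1}{2}-\binom{k_2}{2}$; $\sigma_{\mathcal F}=\{u_{\mathcal F},u_{\mathcal F}+1,\dots\}\setminus\{u_{\mathcal F}+f:f\in F_1\}$. $L_n^{\hat\alpha;\mathcal F}(x)$ is the $(k+1)\times(k+1)$ determinant with first row $\big((L^{\hat\alpha}_{n-u_{\mathcal F}})^{(j-1)}(x)\big)_{j=1}^{k+1}$, then rows $\big((L_f^{\hat\alpha})^{(j-1)}(x)\big)_j$ for $f\in F_1$ (increasing), then rows $\big(L_f^{\hat\alpha+j-1}(-x)\big)_j$ for $f\in F_2$. $\Omega^{\hat\alpha}_{\mathcal F}(x)$ is the $k\times k$ determinant with rows $\big((L_f^{\hat\alpha})^{(j-1)}(x)\big)_{j=1}^k$, $f\in F_1$, followed by rows $\big(L_f^{\hat\alpha+j-1}(-x)\big)_{j=1}^k$, $f\in F_2$. *)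

theory Defs
  imports "Jordan_Normal_Form.Determinant" "HOL-Computational_Algebra.Polynomial"
begin

definition lag :: "nat \<Rightarrow> int \<Rightarrow> real poly" where
  "lag n a = (\<Sum>j\<le>n. monom ((-1)^j / fact j * ((of_int (int n + a) :: real) gchoose (n - j))) j)"

definition uF :: "nat set \<Rightarrow> nat set \<Rightarrow> int" where
  "uF F1 F2 = int (\<Sum>F1) + int (\<Sum>F2) - int ((card F1 + 1) choose 2) - int (card F2 choose 2)"

definition sigmaF :: "nat set \<Rightarrow> nat set \<Rightarrow> int set" where
  "sigmaF F1 F2 = {m. uF F1 F2 \<le> m} - {uF F1 F2 + int f | f. f \<in> F1}"

definition row1 :: "int \<Rightarrow> nat \<Rightarrow> nat \<Rightarrow> real poly" where
  "row1 a f j = (pderiv ^^ j) (lag f a)"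

definition row2 :: "int \<Rightarrow> nat \<Rightarrow> nat \<Rightarrow> real poly" where
  "row2 a f j = pcompose (lag f (a + int j)) [:0, -1:]"

definition OmegaF :: "int \<Rightarrow> nat set \<Rightarrow> nat set \<Rightarrow> real poly" where
  "OmegaF a F1 F2 =
     (let rows = map (row1 a) (sorted_list_of_set F1) @ map (row2 a) (sorted_list_of_set F2);
          k = card F1 + card F2
      in det (mat k k (\<lambda>(i, j). (rows ! i) j)))"

definition LagF :: "int \<Rightarrow> nat set \<Rightarrow> nat set \<Rightarrow> nat \<Rightarrow> real poly" where
  "LagF a F1 F2 n =
     (let rows = (row1 a (nat (int n - uF F1 F2))) #
                 map (row1 a) (sorted_list_of_set F1) @ map (row2 a) (sorted_list_of_set F2);
          k = card F1 + card F2
      in det (mat (k + 1) (k + 1) (\<lambda>(i, j). (rows ! i) j)))"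

end

theory Submission
  imports Defs
begin

text \<open>Both kinds of rows of the determinants are sequences \<open>R\<^sub>i(s)\<close>, indexed by the column \<open>s\<close>,
  with \<open>R\<^sub>i(s + 1) = (\<partial> + c\<^sub>i) R\<^sub>i(s)\<close> for a constant \<open>c\<^sub>i \<in> {0, 1}\<close>, and the Laguerre equation
  propagates along each row to a three-term relation
  \<open>\<mu>\<^sub>i R\<^sub>i(s) = s R\<^sub>i(s) - (\<alpha> + s + 1 - x) R\<^sub>i(s + 1) - x R\<^sub>i(s + 2)\<close>.
  By multilinearity the first two derivatives of \<open>L = L\<^sub>n\<^sup>\<alpha>\<^sup>;\<^sup>F\<close> and of \<open>\<Omega>\<close> are combinations of
  minors with shifted last columns, and summing the three-term relations over the columns
  expresses \<open>\<Sum>\<^sub>i \<mu>\<^sub>i\<close> times a minor through the same shifted minors. Substituting all of this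
  into the equation multiplied by \<open>\<Omega>\<close> leaves a three-term Pluecker relation.\<close>

section \<open>Determinants as functions of their columns\<close>

definition col_det :: "nat \<Rightarrow> (nat \<Rightarrow> nat \<Rightarrow> 'a::comm_ring_1) \<Rightarrow> 'a" where
  "col_det m C = det (mat m m (\<lambda>(i, j). C j i))"

lemma col_det_leibniz:
  "col_det m C = (\<Sum>p | p permutes {0..<m}. signof p * (\<Prod>i=0..<m. C (p i) i))"
proof -
  have "col_det m C = (\<Sum>p | p permutes {0..<m}.
      signof p * (\<Prod>i=0..<m. mat m m (\<lambda>(i, j). C j i) $$ (i, p i)))"
    unfolding col_det_def by (rule det_def') auto
  also have "\<dots> = (\<Sum>p | p permutes {0..<m}. signof p * (\<Prod>i=0..<m. C (p i) i))"
    by (intro sum.cong refl arg_cong2[where f="(*)"] prod.cong) (auto simp: permutes_in_image)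
  finally show ?thesis .
qed

lemma col_det_0 [simp]: "col_det 0 C = 1"
  by (simp add: col_det_def)

lemma col_det_cong:
  assumes "\<And>j i. j < m \<Longrightarrow> i < m \<Longrightarrow> C j i = C' j i"
  shows "col_det m C = col_det m C'"
  unfolding col_det_def by (rule arg_cong[where f=det]) (auto intro!: eq_matI assms)

lemma prod_permutes_fun_upd:
  fixes m :: nat
  assumes p: "p permutes {0..<m}" and j: "j < m"
  shows "(\<Prod>i=0..<m. (C(j := g)) (p i) i)
    = g (inv_into UNIV p j) * (\<Prod>i\<in>{0..<m} - {inv_into UNIV p j}. C (p i) i)"
proof -
  have pi0: "p (inv_into UNIV p j) = j" using permutes_inverses[OF p] by simp
  have i0: "inv_into UNIV p j \<in> {0..<m}"
    using permutes_in_image[OF permutes_inv[OF p], of j] j by simp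
  have "(\<Prod>i\<in>{0..<m} - {inv_into UNIV p j}. (C(j := g)) (p i) i)
      = (\<Prod>i\<in>{0..<m} - {inv_into UNIV p j}. C (p i) i)"
    using permutes_inverses(2)[OF p] by (intro prod.cong) auto
  with i0 pi0 show ?thesis by (simp add: prod.remove)
qed

lemma col_det_fun_upd:
  assumes "j < m"
  shows "col_det m (C(j := g)) = (\<Sum>p | p permutes {0..<m}.
    signof p * (g (inv_into UNIV p j) * (\<Prod>i\<in>{0..<m} - {inv_into UNIV p j}. C (p i) i)))"
  unfolding col_det_leibniz
  by (rule sum.cong[OF refl]) (simp add: prod_permutes_fun_upd[OF _ assms] del: fun_upd_apply)

lemma col_det_sum_col:
  assumes "j < m" and "finite S"
  shows "col_det m (C(j := (\<lambda>i. \<Sum>l\<in>S. h l i))) = (\<Sum>l\<in>S. col_det m (C(j := h l)))"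
  unfolding col_det_fun_upd[OF assms(1)]
  by (subst sum.swap) (simp add: sum_distrib_left sum_distrib_right)

lemma col_det_scale_col:
  assumes "j < m"
  shows "col_det m (C(j := (\<lambda>i. a * h i))) = a * col_det m (C(j := h))"
  unfolding col_det_fun_upd[OF assms] by (simp add: sum_distrib_left algebra_simps)

lemma col_det_diff_col:
  assumes "j < m"
  shows "col_det m (C(j := (\<lambda>i. u i - v i))) = col_det m (C(j := u)) - col_det m (C(j := v))"
  unfolding col_det_fun_upd[OF assms] by (simp add: sum_subtractf algebra_simps)

lemma col_det_equal_cols:
  assumes "j < m" "j' < m" "j \<noteq> j'" "\<And>i. i < m \<Longrightarrow> C j i = C j' i"
  shows "col_det m C = 0"
  unfolding col_det_def
  by (rule det_identical_columns[of _ m j j']) (use assms in \<open>auto intro!: eq_vecI\<close>)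

lemma col_det_swap_cols:
  assumes "j < m" "j' < m" "j \<noteq> j'"
  shows "col_det m (C(j := C j', j' := C j)) = - col_det m C"
proof -
  have "col_det m (C(j := C j', j' := C j)) = det (swapcols j j' (mat m m (\<lambda>(i, j). C j i)))"
    unfolding col_det_def using assms
    by (intro arg_cong[where f=det] eq_matI) (auto simp: mat_swapcols_def)
  also have "\<dots> = - col_det m C"
    unfolding col_det_def by (rule det_swapcols) (use assms in auto)
  finally show ?thesis .
qed

lemma sum_permutes_inv_reindex:
  fixes m :: nat
  assumes p: "p permutes {0..<m}"
  shows "(\<Sum>i<m. f (p i) i) = (\<Sum>j<m. f j (inv_into UNIV p j))"
  using permutes_inverses[OF p] permutes_in_image[OF p] permutes_in_image[OF permutes_inv[OF p]]
  by (intro sum.reindex_bij_witness[where i="inv_into UNIV p" and j=p]) auto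

lemma col_det_row_weights_sum:
  "(\<Sum>j<m. col_det m (C(j := (\<lambda>i. w i * C j i)))) = (\<Sum>i<m. w i) * col_det m C"
proof -
  have split: "(\<Prod>i=0..<m. C (p i) i)
      = C j (inv_into UNIV p j) * (\<Prod>i\<in>{0..<m} - {inv_into UNIV p j}. C (p i) i)"
    if "p permutes {0..<m}" "j < m" for p j
    using prod_permutes_fun_upd[OF that, of C "C j"] by simp
  have "(\<Sum>j<m. col_det m (C(j := (\<lambda>i. w i * C j i)))) =
     (\<Sum>j<m. \<Sum>p | p permutes {0..<m}. signof p * (w (inv_into UNIV p j) * (\<Prod>i=0..<m. C (p i) i)))"
    by (intro sum.cong refl) (auto simp: col_det_fun_upd split mult.assoc)
  also have "\<dots> = (\<Sum>p | p permutes {0..<m}.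
      signof p * (\<Prod>i=0..<m. C (p i) i) * (\<Sum>j<m. w (inv_into UNIV p j)))"
    by (subst sum.swap) (auto simp: sum_distrib_left sum_distrib_right ac_simps intro!: sum.cong)
  also have "\<dots> = (\<Sum>p | p permutes {0..<m}. signof p * (\<Prod>i=0..<m. C (p i) i) * (\<Sum>i<m. w i))"
    using sum_permutes_inv_reindex[of _ m "\<lambda>_ i. w i"] by (intro sum.cong) auto
  also have "\<dots> = (\<Sum>i<m. w i) * col_det m C"
    unfolding col_det_leibniz by (simp add: sum_distrib_left sum_distrib_right ac_simps)
  finally show ?thesis .
qed

lemma pderiv_col_det:
  fixes C :: "nat \<Rightarrow> nat \<Rightarrow> 'a::idom poly"
  shows "pderiv (col_det m C) = (\<Sum>j<m. col_det m (C(j := (\<lambda>i. pderiv (C j i)))))"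
proof -
  have sign: "pderiv (signof p :: 'a poly) = 0" for p
    by (simp add: sign_def pderiv_minus)
  have "pderiv (col_det m C) = (\<Sum>p | p permutes {0..<m}.
      signof p * (\<Sum>i0<m. (\<Prod>i\<in>{0..<m} - {i0}. C (p i) i) * pderiv (C (p i0) i0)))"
    unfolding col_det_leibniz higher_pderiv_sum[of 1, simplified]
    by (simp add: pderiv_mult pderiv_prod sign atLeast0LessThan)
  also have "\<dots> = (\<Sum>p | p permutes {0..<m}.
      signof p * (\<Sum>j<m. (\<Prod>i\<in>{0..<m} - {inv_into UNIV p j}. C (p i) i)
        * pderiv (C j (inv_into UNIV p j))))"
    using sum_permutes_inv_reindex[of _ m
        "\<lambda>j i0. (\<Prod>i\<in>{0..<m} - {i0}. C (p i) i) * pderiv (C j i0)" for p]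
    by (intro sum.cong) auto
  also have "\<dots> = (\<Sum>j<m. \<Sum>p | p permutes {0..<m}.
      signof p * (pderiv (C j (inv_into UNIV p j)) * (\<Prod>i\<in>{0..<m} - {inv_into UNIV p j}. C (p i) i)))"
    by (subst sum.swap) (simp add: sum_distrib_left ac_simps)
  also have "\<dots> = (\<Sum>j<m. col_det m (C(j := (\<lambda>i. pderiv (C j i)))))"
    by (intro sum.cong refl) (simp add: col_det_fun_upd)
  finally show ?thesis .
qed

lemma col_det_laplace_repeated_row:
  fixes C :: "nat \<Rightarrow> nat \<Rightarrow> 'a::comm_ring_1"
  assumes r: "r < n"
  shows "(\<Sum>j<Suc n. (-1)^j * C j r * col_det n (\<lambda>j' i. C (if j' < j then j' else Suc j') i)) = 0"
proof -
  define A where "A = mat (Suc n) (Suc n) (\<lambda>(i, j). C j (if i = 0 then r else i - 1))"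
  have A: "A \<in> carrier_mat (Suc n) (Suc n)" unfolding A_def by simp
  have "det A = 0"
    by (rule det_identical_rows[OF A, of 0 "Suc r"]) (use r in \<open>auto simp: A_def intro!: eq_vecI\<close>)
  moreover have "det A = (\<Sum>j<Suc n. A $$ (0, j) * cofactor A 0 j)"
    by (rule laplace_expansion_row[OF A]) simp
  moreover have "A $$ (0, j) * cofactor A 0 j
      = (-1)^j * C j r * col_det n (\<lambda>j' i. C (if j' < j then j' else Suc j') i)"
    if j: "j < Suc n" for j
  proof -
    have "mat_delete A 0 j = mat n n (\<lambda>(i, j'). C (if j' < j then j' else Suc j') i)"
      unfolding mat_delete_def A_def by (rule eq_matI) auto
    then show ?thesis unfolding cofactor_def col_det_def using j by (simp add: A_def)
  qed
  ultimately show ?thesis by simp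
qed

text \<open>The signed maximal minors \<open>a j\<close> of the rows
  \<open>R 0, \<dots>, R (k+1)\<close> restricted to the columns \<open>0, \<dots>, k+2\<close> form a vector orthogonal to every
  row; feeding the column \<open>\<Sum>j. a j * R _ j\<close> into the last column of the minor \<open>\<Omega>\<close> of the
  rows \<open>R 1, \<dots>\<close> leaves only three nonzero terms.\<close>
lemma col_det_pluecker:
  fixes R :: "nat \<Rightarrow> nat \<Rightarrow> 'a::comm_ring_1" and k :: nat
  defines "\<Omega> \<equiv> \<lambda>cs. col_det (Suc k) (\<lambda>j i. R (Suc i) (cs j))"
  defines "L \<equiv> \<lambda>cs. col_det (Suc (Suc k)) (\<lambda>j i. R i (cs j))"
  shows "\<Omega> id * L (id(k := Suc k, Suc k := Suc (Suc k)))
    - \<Omega> (id(k := Suc k)) * L (id(Suc k := Suc (Suc k))) + \<Omega> (id(k := Suc (Suc k))) * L id = 0"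
proof -
  define a where "a = (\<lambda>j. (-1)^j * L (\<lambda>j'. if j' < j then j' else Suc j'))"
  have orth: "(\<Sum>j<Suc (Suc (Suc k)). a j * R r j) = 0" if "r < Suc (Suc k)" for r
    using col_det_laplace_repeated_row[of r "Suc (Suc k)" "\<lambda>j i. R i j"] that
    unfolding a_def L_def by (simp add: ac_simps)
  define B where "B = (\<lambda>j i. R (Suc i) j)"
  define \<psi> where "\<psi> = (\<lambda>v. col_det (Suc k) (B(k := (\<lambda>i. v (Suc i)))))"
  have "\<psi> (\<lambda>r. \<Sum>j<Suc (Suc (Suc k)). a j * R r j) = \<psi> (\<lambda>r. 0 * R r 0)"
    unfolding \<psi>_def by (rule col_det_cong) (use orth in auto)
  also have "\<dots> = 0" unfolding \<psi>_def using col_det_scale_col[of k "Suc k" B 0] by simp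
  finally have "\<psi> (\<lambda>r. \<Sum>j<Suc (Suc (Suc k)). a j * R r j) = 0" .
  moreover have "\<psi> (\<lambda>r. \<Sum>j<Suc (Suc (Suc k)). a j * R r j)
      = (\<Sum>j<Suc (Suc (Suc k)). a j * \<psi> (\<lambda>r. R r j))"
    unfolding \<psi>_def by (subst col_det_sum_col) (auto intro!: sum.cong simp: col_det_scale_col)
  moreover have "(\<Sum>j<k. a j * \<psi> (\<lambda>r. R r j)) = 0"
  proof -
    have "\<psi> (\<lambda>r. R r j) = 0" if "j < k" for j
      unfolding \<psi>_def by (rule col_det_equal_cols[of j "Suc k" k]) (use that in \<open>auto simp: B_def\<close>)
    then show ?thesis by simp
  qed
  moreover have "\<psi> (\<lambda>r. R r k) = \<Omega> id" "\<psi> (\<lambda>r. R r (Suc k)) = \<Omega> (id(k := Suc k))"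
      "\<psi> (\<lambda>r. R r (Suc (Suc k))) = \<Omega> (id(k := Suc (Suc k)))"
    unfolding \<psi>_def \<Omega>_def by (rule col_det_cong; auto simp: B_def)+
  moreover have L_shifts:
      "L (\<lambda>j'. if j' < k then j' else Suc j') = L (id(k := Suc k, Suc k := Suc (Suc k)))"
      "L (\<lambda>j'. if j' < Suc k then j' else Suc j') = L (id(Suc k := Suc (Suc k)))"
      "L (\<lambda>j'. if j' < Suc (Suc k) then j' else Suc j') = L id"
    unfolding L_def by (rule col_det_cong; auto)+
  moreover have "a k = (-1)^k * L (id(k := Suc k, Suc k := Suc (Suc k)))"
      "a (Suc k) = - ((-1)^k * L (id(Suc k := Suc (Suc k))))" "a (Suc (Suc k)) = (-1)^k * L id"
    unfolding a_def using L_shifts by simp_all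
  ultimately have "(-1)^k * (\<Omega> id * L (id(k := Suc k, Suc k := Suc (Suc k)))
      - \<Omega> (id(k := Suc k)) * L (id(Suc k := Suc (Suc k))) + \<Omega> (id(k := Suc (Suc k))) * L id) = 0"
    by (simp add: algebra_simps)
  then have "(-1)^k * ((-1)^k * (\<Omega> id * L (id(k := Suc k, Suc k := Suc (Suc k)))
      - \<Omega> (id(k := Suc k)) * L (id(Suc k := Suc (Suc k))) + \<Omega> (id(k := Suc (Suc k))) * L id)) = 0"
    by simp
  then show ?thesis by (simp only: mult.assoc[symmetric] minus_one_mult_self mult_1)
qed

text \<open>Substituting the derivatives of \<open>L\<close> and \<open>\<Omega>\<close> and their eigenvalue relations into the differential
  equation leaves \<open>2 X\<close> times the Pluecker relation between the minors with shifted columns.\<close>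
lemma minor_relations_imp_ode:
  fixes L La Lb Lc \<Omega> Oa Ob Oc L1 L2 O1 O2 \<gamma> \<mu>0 \<mu>B X A K S :: "'a::comm_ring_1"
  assumes "L1 = La - \<gamma> * L" and "L2 = Lb + Lc - \<gamma> * La - \<gamma> * (La - \<gamma> * L)"
    and "O1 = Oa - \<gamma> * \<Omega>" and "O2 = Ob + Oc - \<gamma> * Oa - \<gamma> * (Oa - \<gamma> * \<Omega>)"
    and "(\<mu>0 + \<mu>B) * L = (S + K) * L - (A + K + 1 - X) * La + X * Lb - X * Lc"
    and "\<mu>B * \<Omega> = S * \<Omega> - (A + K - X) * Oa + X * Ob - X * Oc"
    and "\<Omega> * Lb - Oa * La + Oc * L = 0"
  shows "X * L2 * \<Omega> + (A + K + 1 - X) * L1 * \<Omega> - 2 * X * O1 * L1 + (\<mu>0 + \<gamma> - K) * L * \<Omega>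
    + (X - A - K) * O1 * L + X * O2 * L = 0"
proof -
  have "X * L2 * \<Omega> + (A + K + 1 - X) * L1 * \<Omega> - 2 * X * O1 * L1 + (\<mu>0 + \<gamma> - K) * L * \<Omega>
      + (X - A - K) * O1 * L + X * O2 * L
    = \<Omega> * ((\<mu>0 + \<mu>B) * L - ((S + K) * L - (A + K + 1 - X) * La + X * Lb - X * Lc))
      - L * (\<mu>B * \<Omega> - (S * \<Omega> - (A + K - X) * Oa + X * Ob - X * Oc))
      + 2 * X * (\<Omega> * Lb - Oa * La + Oc * L)"
    unfolding assms(1-4) by (simp add: algebra_simps)
  with assms(5-7) show ?thesis by simp
qed

section \<open>Laguerre polynomials\<close>

lemma coeff_lag:
  "coeff (lag f b) j
    = (if j \<le> f then (-1)^j / fact j * ((of_int (int f + b) :: real) gchoose (f - j)) else 0)"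
  unfolding lag_def by (simp add: coeff_sum coeff_monom)

lemma of_nat_Suc_mult_div_fact_Suc: "(of_nat (Suc j) :: real) * (y / fact (Suc j)) = y / fact j"
  by (simp add: field_simps del: of_nat_Suc)

lemma lag_ode:
  "[:0, 1:] * pderiv (pderiv (lag f b)) + ([:of_int b:] + 1 - [:0, 1:]) * pderiv (lag f b)
    + of_nat f * lag f b = 0"
proof (rule poly_eqI)
  fix j
  define N where "N = (of_int (int f + b) :: real)"
  define cc where "cc = coeff (lag f b)"
  have cc: "cc j = (if j \<le> f then (-1)^j / fact j * (N gchoose (f - j)) else 0)" for j
    unfolding cc_def N_def coeff_lag ..
  have "of_nat (Suc j) * (of_nat j + of_int b + 1) * cc (Suc j) + (of_nat f - of_nat j) * cc j = 0"
  proof (cases "j < f")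
    case True
    define t where "t = f - Suc j"
    have ft: "f - j = Suc t" and Nt: "N - of_nat t = of_nat j + of_int b + 1"
      and fj: "(of_nat f - of_nat j :: real) = of_nat (Suc t)"
      using True unfolding t_def N_def by (simp_all add: of_nat_diff)
    have "of_nat (Suc t) * (N gchoose Suc t) = (N - of_nat t) * (N gchoose t)"
      using gbinomial_mult_1[of N t] by (simp add: algebra_simps)
    then have "(of_nat f - of_nat j) * cc j = (-1)^j / fact j * ((N - of_nat t) * (N gchoose t))"
      using True unfolding cc ft fj by simp
    moreover have "of_nat (Suc j) * cc (Suc j) = - ((-1)^j / fact j * (N gchoose t))"
      using True of_nat_Suc_mult_div_fact_Suc[of j "(-1)^Suc j * (N gchoose t)"]
      unfolding cc t_def by simp
    then have "of_nat (Suc j) * (of_nat j + of_int b + 1) * cc (Suc j)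
        = - ((-1)^j / fact j * ((N - of_nat t) * (N gchoose t)))"
      unfolding Nt[symmetric] by (metis mult.assoc mult.commute mult_minus_right)
    ultimately show ?thesis by simp
  qed (simp add: cc)
  then show "coeff ([:0, 1:] * pderiv (pderiv (lag f b))
      + ([:of_int b:] + 1 - [:0, 1:]) * pderiv (lag f b) + of_nat f * lag f b) j = coeff 0 j"
    by (cases j) (simp_all add: cc_def coeff_pderiv of_nat_poly algebra_simps)
qed

lemma lag_param_Suc: "lag f (b + 1) = lag f b - pderiv (lag f b)"
proof (rule poly_eqI)
  fix j
  define N where "N = (of_int (int f + b) :: real)"
  have N1: "(of_int (int f + (b + 1)) :: real) = N + 1" unfolding N_def by simp
  show "coeff (lag f (b + 1)) j = coeff (lag f b - pderiv (lag f b)) j"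
  proof (cases "j < f")
    case True
    define t where "t = f - Suc j"
    have ft: "f - j = Suc t" using True unfolding t_def by simp
    have "coeff (lag f (b + 1)) j = (-1)^j / fact j * ((N gchoose Suc t) + (N gchoose t))"
      using True unfolding coeff_lag N1 ft gbinomial_Suc_Suc
      by (simp add: algebra_simps add_divide_distrib)
    also have "\<dots> = coeff (lag f b) j - of_nat (Suc j) * (((-1)^Suc j * (N gchoose t)) / fact (Suc j))"
      unfolding of_nat_Suc_mult_div_fact_Suc using True unfolding coeff_lag N_def ft
      by (simp add: algebra_simps)
    also have "\<dots> = coeff (lag f b - pderiv (lag f b)) j"
      using True unfolding coeff_diff coeff_pderiv coeff_lag N_def t_def by simp
    finally show ?thesis .
  next
    case False
    then show ?thesis by (cases "j = f") (simp_all add: coeff_lag coeff_pderiv)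
  qed
qed

section \<open>Rows of Laguerre type and their minors\<close>

definition col_minor :: "(nat \<Rightarrow> nat \<Rightarrow> 'a::comm_ring_1) \<Rightarrow> nat \<Rightarrow> (nat \<Rightarrow> nat) \<Rightarrow> 'a" where
  "col_minor R m cs = col_det m (\<lambda>j i. R i (cs j))"

text \<open>\<open>R i s\<close> is the entry in row \<open>i\<close>, column \<open>s\<close>. The rows of \<open>LagF\<close> made of derivatives of
  \<open>L\<^sub>f\<close> fit with \<open>c i = 0\<close>, the rows made of \<open>L\<^sub>f\<^sup>\<alpha>\<^sup>+\<^sup>s(-x)\<close> with \<open>c i = 1\<close>.\<close>
locale laguerre_rows =
  fixes R :: "nat \<Rightarrow> nat \<Rightarrow> real poly" and c \<mu> :: "nat \<Rightarrow> real" and \<alpha> :: real and m :: nat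
  assumes pderiv_row: "i < m \<Longrightarrow> pderiv (R i s) = R i (Suc s) - [:c i:] * R i s"
    and row_ode: "i < m \<Longrightarrow> [:0, 1:] * R i 2 + ([:\<alpha>:] + 1 - [:0, 1:]) * R i 1 + [:\<mu> i:] * R i 0 = 0"
begin

lemma row_eigen:
  assumes i: "i < m"
  shows "[:\<mu> i:] * R i s
    = of_nat s * R i s - ([:\<alpha>:] + of_nat s + 1 - [:0, 1:]) * R i (Suc s)
      - [:0, 1:] * R i (Suc (Suc s))"
proof (induction s)
  case 0
  have "M * R0 = of_nat 0 * R0 - (B + of_nat 0 + 1 - X) * R1 - X * R2"
    if "X * R2 + (B + 1 - X) * R1 + M * R0 = 0" for X B M R0 R1 R2 :: "real poly"
    using that by (simp add: algebra_simps)
  from this[OF row_ode[OF i]] show ?case by (simp add: numeral_2_eq_2)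
next
  case (Suc s)
  define X :: "real poly" where "X = [:0, 1:]"
  define A where "A = [:\<alpha>:] + of_nat s + 1 - X"
  define M where "M = [:\<mu> i:]"
  define C where "C = [:c i:]"
  have D: "pderiv (R i t) = R i (Suc t) - C * R i t" for t
    unfolding C_def using pderiv_row[OF i] .
  have IH: "M * R i s = of_nat s * R i s - A * R i (Suc s) - X * R i (Suc (Suc s))"
    using Suc.IH unfolding M_def A_def X_def .
  have "pderiv (M * R i s) = pderiv (of_nat s * R i s - A * R i (Suc s) - X * R i (Suc (Suc s)))"
    by (simp only: IH)
  moreover have "pderiv M = 0" "pderiv A = -1" "pderiv X = 1"
    unfolding M_def A_def X_def by (simp_all add: pderiv_pCons pderiv_diff pderiv_add one_pCons)
  ultimately have "M * (R i (Suc s) - C * R i s) = of_nat s * (R i (Suc s) - C * R i s)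
      - (A * (R i (Suc (Suc s)) - C * R i (Suc s)) - R i (Suc s))
      - (X * (R i (Suc (Suc (Suc s))) - C * R i (Suc (Suc s))) + R i (Suc (Suc s)))"
    by (simp add: pderiv_mult pderiv_diff D)
  then have "M * R i (Suc s) = of_nat (Suc s) * R i (Suc s) - (A + 1) * R i (Suc (Suc s))
      - X * R i (Suc (Suc (Suc s)))"
    using IH by (simp add: algebra_simps)
  moreover have "A + 1 = [:\<alpha>:] + of_nat (Suc s) + 1 - X"
    unfolding A_def by simp
  ultimately show ?case unfolding M_def X_def by simp
qed

abbreviation minor :: "(nat \<Rightarrow> nat) \<Rightarrow> real poly" where
  "minor \<equiv> col_minor R m"

lemma minor_cong: "(\<And>j. j < m \<Longrightarrow> cs j = cs' j) \<Longrightarrow> minor cs = minor cs'"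
  unfolding col_minor_def by (rule col_det_cong) auto

lemma minor_equal_cols: "j < m \<Longrightarrow> j' < m \<Longrightarrow> j \<noteq> j' \<Longrightarrow> cs j = cs j' \<Longrightarrow> minor cs = 0"
  unfolding col_minor_def by (rule col_det_equal_cols[of j m j']) auto

lemma minor_swap_cols:
  assumes "j < m" "j' < m" "j \<noteq> j'"
  shows "minor (cs(j := cs j', j' := cs j)) = - minor cs"
proof -
  have "minor (cs(j := cs j', j' := cs j))
      = col_det m ((\<lambda>j i. R i (cs j))(j := (\<lambda>i. R i (cs j')), j' := (\<lambda>i. R i (cs j))))"
    unfolding col_minor_def by (rule col_det_cong) auto
  also have "\<dots> = - minor cs" unfolding col_minor_def by (rule col_det_swap_cols) (use assms in auto)
  finally show ?thesis .
qed

lemma col_fun_upd: "(\<lambda>j i. R i (cs j))(j := (\<lambda>i. R i s)) = (\<lambda>j' i. R i ((cs(j := s)) j'))"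
  by auto

lemma pderiv_minor:
  "pderiv (minor cs) = (\<Sum>j<m. minor (cs(j := Suc (cs j)))) - [:\<Sum>i<m. c i:] * minor cs"
proof -
  let ?C = "\<lambda>j i. R i (cs j)"
  have "pderiv (minor cs) = (\<Sum>j<m. col_det m (?C(j := (\<lambda>i. pderiv (?C j i)))))"
    unfolding col_minor_def by (rule pderiv_col_det)
  also have "\<dots> = (\<Sum>j<m. col_det m (?C(j := (\<lambda>i. R i (Suc (cs j)))))
      - col_det m (?C(j := (\<lambda>i. [:c i:] * ?C j i))))"
  proof (rule sum.cong[OF refl])
    fix j assume "j \<in> {..<m}"
    then have "col_det m (?C(j := (\<lambda>i. pderiv (?C j i))))
        = col_det m (?C(j := (\<lambda>i. R i (Suc (cs j)) - [:c i:] * ?C j i)))"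
      by (intro col_det_cong) (auto simp: pderiv_row)
    also have "\<dots> = col_det m (?C(j := (\<lambda>i. R i (Suc (cs j)))))
        - col_det m (?C(j := (\<lambda>i. [:c i:] * ?C j i)))"
      using \<open>j \<in> {..<m}\<close> by (intro col_det_diff_col) auto
    finally show "col_det m (?C(j := (\<lambda>i. pderiv (?C j i))))
      = col_det m (?C(j := (\<lambda>i. R i (Suc (cs j))))) - col_det m (?C(j := (\<lambda>i. [:c i:] * ?C j i)))" .
  qed
  also have "\<dots> = (\<Sum>j<m. minor (cs(j := Suc (cs j)))) - [:\<Sum>i<m. c i:] * minor cs"
    unfolding sum_subtractf col_det_row_weights_sum col_minor_def col_fun_upd sum_to_poly ..
  finally show ?thesis .
qed

lemma minor_eigen_trace:
  "[:\<Sum>i<m. \<mu> i:] * minor cs = (\<Sum>j<m. of_nat (cs j) * minor cs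
      - ([:\<alpha>:] + of_nat (cs j) + 1 - [:0, 1:]) * minor (cs(j := Suc (cs j)))
      - [:0, 1:] * minor (cs(j := Suc (Suc (cs j)))))"
proof -
  let ?C = "\<lambda>j i. R i (cs j)"
  have "[:\<Sum>i<m. \<mu> i:] * minor cs = (\<Sum>j<m. col_det m (?C(j := (\<lambda>i. [:\<mu> i:] * ?C j i))))"
    unfolding col_minor_def col_det_row_weights_sum sum_to_poly ..
  also have "\<dots> = (\<Sum>j<m. of_nat (cs j) * minor cs
      - ([:\<alpha>:] + of_nat (cs j) + 1 - [:0, 1:]) * minor (cs(j := Suc (cs j)))
      - [:0, 1:] * minor (cs(j := Suc (Suc (cs j)))))"
  proof (rule sum.cong[OF refl])
    fix j assume "j \<in> {..<m}"
    then have j: "j < m" by simp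
    have "col_det m (?C(j := (\<lambda>i. [:\<mu> i:] * ?C j i)))
        = col_det m (?C(j := (\<lambda>i. (of_nat (cs j) * R i (cs j)
            - ([:\<alpha>:] + of_nat (cs j) + 1 - [:0, 1:]) * R i (Suc (cs j)))
            - [:0, 1:] * R i (Suc (Suc (cs j))))))"
      by (rule col_det_cong) (simp add: row_eigen del: mult_pCons_left)
    also have "\<dots> = of_nat (cs j) * col_det m (?C(j := (\<lambda>i. R i (cs j))))
       - ([:\<alpha>:] + of_nat (cs j) + 1 - [:0, 1:]) * col_det m (?C(j := (\<lambda>i. R i (Suc (cs j)))))
       - [:0, 1:] * col_det m (?C(j := (\<lambda>i. R i (Suc (Suc (cs j))))))"
      by (simp only: col_det_diff_col[OF j] col_det_scale_col[OF j])
    finally show "col_det m (?C(j := (\<lambda>i. [:\<mu> i:] * ?C j i))) = of_nat (cs j) * minor cs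
      - ([:\<alpha>:] + of_nat (cs j) + 1 - [:0, 1:]) * minor (cs(j := Suc (cs j)))
      - [:0, 1:] * minor (cs(j := Suc (Suc (cs j))))"
      unfolding col_minor_def col_fun_upd by simp
  qed
  finally show ?thesis .
qed

text \<open>The minor of the columns \<open>0, \<dots>, m' - 2, m', m' + 1\<close>; for \<open>m' = 0\<close> there is no column
  \<open>m' - 1\<close> to skip, and the value \<open>0\<close> keeps the formulas below uniform.\<close>
definition minor_skip_prev :: "nat \<Rightarrow> real poly" where
  "minor_skip_prev m' = (if m' = 0 then 0 else minor (id(m' - 1 := m', m' := Suc m')))"

lemma sum_minor_shift_col:
  assumes m: "m = Suc m'"
  shows "(\<Sum>j<m. f j * minor (id(j := Suc j))) = f m' * minor (id(m' := m))"
proof -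
  have "minor (id(j := Suc j)) = 0" if "j < m'" for j
    by (rule minor_equal_cols[of j "Suc j"]) (use m that in auto)
  then show ?thesis by (simp add: m)
qed

lemma sum_minor_shift2_col:
  assumes m: "m = Suc m'"
  shows "(\<Sum>j<m. f j * minor (id(j := Suc (Suc j))))
    = f m' * minor (id(m' := Suc m)) - f (m' - 1) * minor_skip_prev m'"
proof (cases m')
  case 0
  then show ?thesis unfolding minor_skip_prev_def using m by simp
next
  case (Suc m'')
  have "minor (id(j := Suc (Suc j))) = 0" if "j < m''" for j
    by (rule minor_equal_cols[of j "Suc (Suc j)"]) (use m Suc that in auto)
  moreover have "minor (id(m'' := Suc (Suc m''))) = - minor_skip_prev m'"
  proof -
    let ?B = "id(m'' := m', m' := Suc m')"
    have "minor (id(m'' := Suc (Suc m''))) = minor (?B(m'' := ?B m', m' := ?B m''))"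
      by (rule minor_cong) (auto simp: Suc)
    also have "\<dots> = - minor ?B" by (rule minor_swap_cols) (auto simp: m Suc)
    finally show ?thesis unfolding minor_skip_prev_def using Suc by simp
  qed
  ultimately show ?thesis by (simp add: m Suc)
qed

lemma pderiv_minor_id:
  assumes "m = Suc m'"
  shows "pderiv (minor id) = minor (id(m' := m)) - [:\<Sum>i<m. c i:] * minor id"
  using sum_minor_shift_col[OF assms, of "\<lambda>_. 1"] by (simp add: pderiv_minor)

lemma pderiv_minor_shift_last:
  assumes m: "m = Suc m'"
  shows "pderiv (minor (id(m' := m)))
    = minor_skip_prev m' + minor (id(m' := Suc m)) - [:\<Sum>i<m. c i:] * minor (id(m' := m))"
proof -
  let ?A = "id(m' := m)"
  have "(\<Sum>j<m. minor (?A(j := Suc (?A j)))) = minor_skip_prev m' + minor (id(m' := Suc m))"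
  proof (cases m')
    case 0
    then show ?thesis unfolding minor_skip_prev_def using m by simp
  next
    case (Suc m'')
    have "minor (?A(j := Suc (?A j))) = 0" if "j < m''" for j
      by (rule minor_equal_cols[of j "Suc j"]) (use m Suc that in auto)
    moreover have "minor (?A(m'' := Suc (?A m''))) = minor_skip_prev m'"
      unfolding minor_skip_prev_def using m Suc by (simp add: fun_upd_twist)
    ultimately show ?thesis using m Suc by simp
  qed
  then show ?thesis by (simp add: pderiv_minor)
qed

lemma pderiv2_minor_id:
  assumes m: "m = Suc m'"
  defines "\<gamma> \<equiv> [:\<Sum>i<m. c i:]"
  shows "pderiv (pderiv (minor id)) = minor_skip_prev m' + minor (id(m' := Suc m))
    - \<gamma> * minor (id(m' := m)) - \<gamma> * (minor (id(m' := m)) - \<gamma> * minor id)"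
proof -
  have "pderiv \<gamma> = 0" unfolding \<gamma>_def by (simp add: pderiv_pCons)
  moreover note pderiv_minor_id[OF m, folded \<gamma>_def] pderiv_minor_shift_last[OF m, folded \<gamma>_def]
  ultimately show ?thesis by (simp add: pderiv_diff pderiv_mult)
qed

lemma minor_id_eigen:
  assumes m: "m = Suc m'"
  shows "[:\<Sum>i<m. \<mu> i:] * minor id = of_nat (\<Sum>j<m. j) * minor id
     - ([:\<alpha>:] + of_nat m - [:0, 1:]) * minor (id(m' := m))
     + [:0, 1:] * minor_skip_prev m' - [:0, 1:] * minor (id(m' := Suc m))"
  using sum_minor_shift_col[OF m, of "\<lambda>j. [:\<alpha>:] + of_nat j + 1 - [:0, 1:]"]
    sum_minor_shift2_col[OF m, of "\<lambda>_. [:0, 1:]"]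
  unfolding minor_eigen_trace sum_subtractf
  by (simp add: m sum_distrib_right algebra_simps)

lemma drop_first_row:
  assumes "m = Suc k"
  shows "laguerre_rows (\<lambda>i. R (Suc i)) (\<lambda>i. c (Suc i)) (\<lambda>i. \<mu> (Suc i)) \<alpha> k"
  by unfold_locales (use assms pderiv_row row_ode in auto)

lemma minor_drop_first_row_relations:
  assumes m: "m = Suc k" and c0: "c 0 = 0"
  defines "\<Omega> \<equiv> col_minor (\<lambda>i. R (Suc i)) k id" and "\<gamma> \<equiv> [:\<Sum>i<m. c i:]" and "X \<equiv> [:0, 1:]"
  obtains Oa Ob Oc where "pderiv \<Omega> = Oa - \<gamma> * \<Omega>"
    and "pderiv (pderiv \<Omega>) = Ob + Oc - \<gamma> * Oa - \<gamma> * (Oa - \<gamma> * \<Omega>)"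
    and "[:\<Sum>i<k. \<mu> (Suc i):] * \<Omega>
      = of_nat (\<Sum>j<k. j) * \<Omega> - ([:\<alpha>:] + of_nat k - X) * Oa + X * Ob - X * Oc"
    and "\<Omega> * minor_skip_prev k - Oa * minor (id(k := Suc k)) + Oc * minor id = 0"
proof (cases k)
  case 0
  have "\<Omega> = 1" "minor_skip_prev k = 0" "\<gamma> = 0"
    unfolding \<Omega>_def col_minor_def minor_skip_prev_def \<gamma>_def using 0 m c0 by simp_all
  with 0 show thesis by (intro that[of 0 0 0]) simp_all
next
  case (Suc k')
  interpret B: laguerre_rows "\<lambda>i. R (Suc i)" "\<lambda>i. c (Suc i)" "\<lambda>i. \<mu> (Suc i)" \<alpha> k
    by (rule drop_first_row[OF m])
  have \<gamma>B: "[:\<Sum>i<k. c (Suc i):] = \<gamma>"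
    using sum.lessThan_Suc_shift[of c k] c0 m unfolding \<gamma>_def by simp
  show thesis
  proof (rule that)
    show "pderiv \<Omega> = B.minor (id(k' := k)) - \<gamma> * \<Omega>"
      and "pderiv (pderiv \<Omega>) = B.minor_skip_prev k' + B.minor (id(k' := Suc k))
        - \<gamma> * B.minor (id(k' := k)) - \<gamma> * (B.minor (id(k' := k)) - \<gamma> * \<Omega>)"
      using B.pderiv_minor_id[OF Suc] B.pderiv2_minor_id[OF Suc] Suc unfolding \<Omega>_def \<gamma>B by simp_all
    show "[:\<Sum>i<k. \<mu> (Suc i):] * \<Omega>
        = of_nat (\<Sum>j<k. j) * \<Omega> - ([:\<alpha>:] + of_nat k - X) * B.minor (id(k' := k))
        + X * B.minor_skip_prev k' - X * B.minor (id(k' := Suc k))"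
      using B.minor_id_eigen[OF Suc] unfolding \<Omega>_def X_def Suc .
    show "\<Omega> * minor_skip_prev k - B.minor (id(k' := k)) * minor (id(k := Suc k))
        + B.minor (id(k' := Suc k)) * minor id = 0"
      using col_det_pluecker[where R=R and k=k'] m
      unfolding \<Omega>_def col_minor_def minor_skip_prev_def unfolding Suc by simp
  qed
qed

lemma minor_ode:
  assumes m: "m = Suc k" and c0: "c 0 = 0"
  defines "L \<equiv> minor id" and "\<Omega> \<equiv> col_minor (\<lambda>i. R (Suc i)) k id"
    and "X \<equiv> [:0, 1:]"
  shows "X * pderiv (pderiv L) * \<Omega> + ([:\<alpha>:] + of_nat k + 1 - X) * pderiv L * \<Omega>
     - 2 * X * pderiv \<Omega> * pderiv L + ([:\<mu> 0 + (\<Sum>i<m. c i):] - of_nat k) * L * \<Omega>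
     + (X - [:\<alpha>:] - of_nat k) * pderiv \<Omega> * L + X * pderiv (pderiv \<Omega>) * L = 0"
proof -
  define \<gamma> where "\<gamma> = [:\<Sum>i<m. c i:]"
  define \<mu>B where "\<mu>B = [:\<Sum>i<k. \<mu> (Suc i):]"
  obtain Oa Ob Oc where dO: "pderiv \<Omega> = Oa - \<gamma> * \<Omega>"
    and ddO: "pderiv (pderiv \<Omega>) = Ob + Oc - \<gamma> * Oa - \<gamma> * (Oa - \<gamma> * \<Omega>)"
    and tO: "\<mu>B * \<Omega> = of_nat (\<Sum>j<k. j) * \<Omega> - ([:\<alpha>:] + of_nat k - X) * Oa + X * Ob - X * Oc"
    and pl: "\<Omega> * minor_skip_prev k - Oa * minor (id(k := Suc k)) + Oc * L = 0"
    using minor_drop_first_row_relations[OF m c0] unfolding \<Omega>_def \<gamma>_def \<mu>B_def X_def L_def by blast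
  have dL: "pderiv L = minor (id(k := Suc k)) - \<gamma> * L"
    and ddL: "pderiv (pderiv L) = minor_skip_prev k + minor (id(k := Suc (Suc k)))
      - \<gamma> * minor (id(k := Suc k)) - \<gamma> * (minor (id(k := Suc k)) - \<gamma> * L)"
    using pderiv_minor_id[OF m] pderiv2_minor_id[OF m] m unfolding L_def \<gamma>_def by simp_all
  have "(\<Sum>j<m. j) = (\<Sum>j<k. j) + k" using m by simp
  moreover have "[:\<Sum>i<m. \<mu> i:] = [:\<mu> 0:] + \<mu>B"
    unfolding \<mu>B_def m by (simp add: sum.lessThan_Suc_shift del: sum.lessThan_Suc)
  ultimately have tL: "([:\<mu> 0:] + \<mu>B) * L = (of_nat (\<Sum>j<k. j) + of_nat k) * L
      - ([:\<alpha>:] + of_nat k + 1 - X) * minor (id(k := Suc k))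
      + X * minor_skip_prev k - X * minor (id(k := Suc (Suc k)))"
    using minor_id_eigen[OF m] m unfolding L_def X_def by (simp add: algebra_simps)
  have "[:\<mu> 0 + (\<Sum>i<m. c i):] = [:\<mu> 0:] + \<gamma>" unfolding \<gamma>_def by simp
  then show ?thesis
    using minor_relations_imp_ode[OF dL ddL dO ddO tL tO pl] by simp
qed

end

lemma pderiv_row1: "pderiv (row1 a f s) = row1 a f (Suc s) - [:0:] * row1 a f s"
  unfolding row1_def by simp

lemma row1_ode:
  "[:0, 1:] * row1 a f 2 + ([:of_int a:] + 1 - [:0, 1:]) * row1 a f 1 + [:real f:] * row1 a f 0 = 0"
  using lag_ode[of f a] unfolding row1_def by (simp add: numeral_2_eq_2 of_nat_poly)

lemma row2_Suc: "row2 a f (Suc s) = row2 a f s - pcompose (pderiv (lag f (a + int s))) [:0, -1:]"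
proof -
  have "a + int (Suc s) = a + int s + 1" by simp
  then show ?thesis unfolding row2_def by (simp only: lag_param_Suc pcompose_diff)
qed

lemma pderiv_row2: "pderiv (row2 a f s) = row2 a f (Suc s) - [:1:] * row2 a f s"
  unfolding row2_Suc by (simp add: row2_def pderiv_pcompose pderiv_pCons)

lemma row2_ode:
  "[:0, 1:] * row2 a f 2 + ([:of_int a:] + 1 - [:0, 1:]) * row2 a f 1
    + [:- of_int a - 1 - real f:] * row2 a f 0 = 0"
proof -
  define q where "q = [:0, -1::real:]"
  define X where "X = [:0, 1::real:]"
  define A where "A = [:of_int a::real:]"
  define \<psi>0 where "\<psi>0 = pcompose (lag f a) q"
  define \<psi>1 where "\<psi>1 = pcompose (pderiv (lag f a)) q"
  define \<psi>2 where "\<psi>2 = pcompose (pderiv (pderiv (lag f a))) q"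
  have "X * pderiv (pderiv (lag f a)) + (A + 1 - X) * pderiv (lag f a) + of_nat f * lag f a = 0"
    using lag_ode[of f a] unfolding X_def A_def .
  then have "pcompose (X * pderiv (pderiv (lag f a)) + (A + 1 - X) * pderiv (lag f a)
      + of_nat f * lag f a) q = 0"
    by simp
  moreover have "pcompose X q = - X" "pcompose A q = A" "pcompose (of_nat f) q = of_nat f"
    unfolding X_def A_def q_def by (simp_all add: pcompose_pCons of_nat_poly)
  ultimately have ode: "- X * \<psi>2 + (A + 1 + X) * \<psi>1 + of_nat f * \<psi>0 = 0"
    unfolding \<psi>0_def \<psi>1_def \<psi>2_def pcompose_add pcompose_mult pcompose_diff pcompose_1 by simp
  have "row2 a f 0 = \<psi>0" "row2 a f 1 = \<psi>0 - \<psi>1" "row2 a f 2 = \<psi>0 - 2 * \<psi>1 + \<psi>2"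
    unfolding \<psi>0_def \<psi>1_def \<psi>2_def q_def numeral_2_eq_2 row2_Suc
    by (simp_all add: row2_def lag_param_Suc pcompose_diff pderiv_diff)
  moreover have "[:- of_int a - 1 - real f:] = - A - 1 - of_nat f"
    unfolding A_def by (simp add: of_nat_poly one_pCons)
  moreover have "X * (\<psi>0 - 2 * \<psi>1 + \<psi>2) + (A + 1 - X) * (\<psi>0 - \<psi>1) + (- A - 1 - of_nat f) * \<psi>0 = 0"
    using ode by (simp add: algebra_simps)
  ultimately show ?thesis unfolding X_def A_def by simp
qed

text \<open>The rows of the determinant \<open>LagF a F1 F2 n\<close>; \<open>d = n - u\<^sub>F\<close> is the degree in the first row.\<close>
definition lagF_rows :: "int \<Rightarrow> nat set \<Rightarrow> nat set \<Rightarrow> nat \<Rightarrow> nat \<Rightarrow> nat \<Rightarrow> real poly" where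
  "lagF_rows a F1 F2 d =
    (!) (row1 a d # map (row1 a) (sorted_list_of_set F1) @ map (row2 a) (sorted_list_of_set F2))"

lemma LagF_eq_minor:
  "LagF a F1 F2 n
    = col_minor (lagF_rows a F1 F2 (nat (int n - uF F1 F2))) (Suc (card F1 + card F2)) id"
  unfolding LagF_def col_minor_def col_det_def lagF_rows_def Let_def
  by (rule arg_cong[where f=det]) (auto intro!: eq_matI)

lemma OmegaF_eq_minor:
  "OmegaF a F1 F2 = col_minor (\<lambda>i. lagF_rows a F1 F2 d (Suc i)) (card F1 + card F2) id"
  unfolding OmegaF_def col_minor_def col_det_def lagF_rows_def Let_def
  by (rule arg_cong[where f=det]) (auto intro!: eq_matI)

lemma laguerre_rows_lagF_rows:
  assumes "finite F1" "finite F2"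
  obtains \<mu> where "laguerre_rows (lagF_rows a F1 F2 d) (\<lambda>i. if i \<le> card F1 then 0 else 1) \<mu> (of_int a)
      (Suc (card F1 + card F2))"
    and "\<mu> 0 = real d"
proof -
  define l1 where "l1 = sorted_list_of_set F1"
  define l2 where "l2 = sorted_list_of_set F2"
  define \<mu> where "\<mu> i = (if i = 0 then real d else if i \<le> card F1 then real (l1 ! (i - 1))
      else - of_int a - 1 - real (l2 ! (i - 1 - card F1)))" for i
  have rows: "lagF_rows a F1 F2 d i = (if i = 0 then row1 a d
      else if i \<le> card F1 then row1 a (l1 ! (i - 1)) else row2 a (l2 ! (i - 1 - card F1)))" if "i < Suc (card F1 + card F2)" for i
    using that assms unfolding lagF_rows_def l1_def l2_def
    by (cases i) (auto simp: nth_append)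
  have "laguerre_rows (lagF_rows a F1 F2 d) (\<lambda>i. if i \<le> card F1 then 0 else 1) \<mu> (of_int a)
      (Suc (card F1 + card F2))"
    by unfold_locales
      (auto simp: rows \<mu>_def pderiv_row1 pderiv_row2
        row1_ode[unfolded One_nat_def] row2_ode[unfolded One_nat_def]
        simp del: mult_pCons_left)
  then show thesis using that[of \<mu>] by (simp add: \<mu>_def)
qed

lemma sum_indicator_gt: "(\<Sum>i<N. if i \<le> k then 0 else 1 :: real) = real (N - Suc k)"
  by (induction N) (auto simp: Suc_diff_le)

lemma LagF_ode:
  fixes a :: int and n :: nat
  assumes "finite F1" "finite F2" "uF F1 F2 \<le> int n"
  defines "L \<equiv> LagF a F1 F2 n" and "\<Omega> \<equiv> OmegaF a F1 F2" and "k \<equiv> card F1 + card F2"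
    and "X \<equiv> [:0, 1:]"
  shows "X * pderiv (pderiv L) * \<Omega> + ([:of_int a:] + of_nat k + 1 - X) * pderiv L * \<Omega>
     - 2 * X * pderiv \<Omega> * pderiv L + [:real n - of_int (uF F1 F2) - real (card F1):] * L * \<Omega>
     + (X - [:of_int a:] - of_nat k) * pderiv \<Omega> * L + X * pderiv (pderiv \<Omega>) * L = 0"
proof -
  define d where "d = nat (int n - uF F1 F2)"
  obtain \<mu> where rows:
      "laguerre_rows (lagF_rows a F1 F2 d) (\<lambda>i. if i \<le> card F1 then 0 else 1) \<mu> (of_int a) (Suc k)"
    and \<mu>0: "\<mu> 0 = real d"
    using laguerre_rows_lagF_rows[OF assms(1,2)] unfolding k_def by blast
  interpret laguerre_rows "lagF_rows a F1 F2 d" "\<lambda>i. if i \<le> card F1 then 0 else 1" \<mu> "of_int a" "Suc k"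
    by (rule rows)
  have "[:\<mu> 0 + (\<Sum>i<Suc k. if i \<le> card F1 then 0 else 1):] - of_nat k
      = [:real n - of_int (uF F1 F2) - real (card F1):]"
    using assms(3) unfolding \<mu>0 d_def sum_indicator_gt k_def by (simp add: of_nat_poly of_nat_diff)
  with minor_ode[of k] show ?thesis
    unfolding L_def \<Omega>_def X_def LagF_eq_minor OmegaF_eq_minor[where d=d] d_def[symmetric] k_def[symmetric]
    by simp
qed

lemma ode_divide_weight:
  fixes W W1 W2 y y1 y2 x p q r :: real
  assumes "W \<noteq> 0"
    and "x * y2 * W + (p - x) * y1 * W - 2 * x * W1 * y1 + q * y * W + r * W1 * y + x * W2 * y = 0"
  shows "x * y2 + (p - x - 2 * x * (W1 / W)) * y1 + (q + r * (W1 / W) + x * (W2 / W)) * y = 0"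
proof -
  have "W * (x * y2 + (p - x - 2 * x * (W1 / W)) * y1 + (q + r * (W1 / W) + x * (W2 / W)) * y)
      = x * y2 * W + (p - x) * y1 * W - 2 * x * W1 * y1 + q * y * W + r * W1 * y + x * W2 * y"
    using assms(1) by (simp add: field_simps)
  with assms show ?thesis by simp
qed

theorem mainTheorem12:
  fixes a :: int and F1 F2 :: "nat set" and n :: nat and x :: real
  assumes "a < 0"
    and "finite F1" and "finite F2" and "0 \<notin> F1" and "0 \<notin> F2"
    and "int n \<in> sigmaF F1 F2"
    and "poly (OmegaF a F1 F2) x \<noteq> 0"
  shows "(let k1 = card F1; k = card F1 + card F2;
              \<Omega> = OmegaF a F1 F2; L = LagF a F1 F2 n;
              r1 = poly (pderiv \<Omega>) x / poly \<Omega> x;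
              r2 = poly (pderiv (pderiv \<Omega>)) x / poly \<Omega> x;
              h1 = of_int a + real k + 1 - x - 2 * x * r1;
              h0 = - real k1 - of_int (uF F1 F2) + (x - of_int a - real k) * r1 + x * r2
          in x * poly (pderiv (pderiv L)) x + h1 * poly (pderiv L) x + h0 * poly L x
             = - real n * poly L x)"
proof -
  have "uF F1 F2 \<le> int n" using assms(6) unfolding sigmaF_def by auto
  from arg_cong[OF LagF_ode[OF assms(2,3) this, of a], of "\<lambda>p. poly p x"]
  have "x * poly (pderiv (pderiv (LagF a F1 F2 n))) x * poly (OmegaF a F1 F2) x
      + (of_int a + real (card F1 + card F2) + 1 - x)
        * poly (pderiv (LagF a F1 F2 n)) x * poly (OmegaF a F1 F2) x
      - 2 * x * poly (pderiv (OmegaF a F1 F2)) x * poly (pderiv (LagF a F1 F2 n)) x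
      + (real n - of_int (uF F1 F2) - real (card F1)) * poly (LagF a F1 F2 n) x * poly (OmegaF a F1 F2) x
      + (x - of_int a - real (card F1 + card F2))
        * poly (pderiv (OmegaF a F1 F2)) x * poly (LagF a F1 F2 n) x
      + x * poly (pderiv (pderiv (OmegaF a F1 F2))) x * poly (LagF a F1 F2 n) x = 0"
    by (simp add: of_nat_poly algebra_simps)
  from ode_divide_weight[OF assms(7) this] show ?thesis
    unfolding Let_def by (simp add: algebra_simps)
qed

end
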